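(* Let $\epsilon>0$ and let $f:\mathbb N\to\mathbb R$ satisfy $f(q)\to\infty$. Then there exist an integer $\gamma>1$ and integers $L_n>1$ with $L_n\to\infty$ such that the rank-one subshift defined by $B_1=0$ and $B_{n+1}=\big((B_n1)^{\gamma}B_n\big)^{L_n}$, with $h_n$ the length of $B_n$, has complexity satisfying $$\limsup_{q\to\infty}\frac{p(q)}{q}<\frac32+\epsilon\quad\text{and}\quad p(h_n)<h_n+f(h_n)\ \text{for all } n\ge2.$$
   Context: For a sequence of finite words $B_n$ over $\{0,1\}$ in which each $B_n$ is a prefix and a subword of $B_{n+1}$, the associated subshift is the set of $x\in\{0,1\}^{\mathbb Z}$ all of whose finite subwords are subwords of some $B_n$; $p(q)$ is the number of distinct words of length $q$ occurring in elements of it. *)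

theory Defs
  imports "HOL-Analysis.Analysis" "HOL-Library.Sublist"
begin

text \<open>blk g L k is the word B_(k+1) of the rank-one construction:
  B_1 = 0, B_(n+1) = ((B_n 1)^g B_n)^(L_n).\<close>
primrec blk :: "nat \<Rightarrow> (nat \<Rightarrow> nat) \<Rightarrow> nat \<Rightarrow> nat list" where
  "blk g L 0 = [0]"
| "blk g L (Suc k) =
     concat (replicate (L (Suc k)) (concat (replicate g (blk g L k @ [1])) @ blk g L k))"

definition rkB :: "nat \<Rightarrow> (nat \<Rightarrow> nat) \<Rightarrow> nat \<Rightarrow> nat list" where
  "rkB g L n = blk g L (n - 1)"   \<comment> \<open>B_n, meaningful for n \<ge> 1\<close>

definition rk_subshift :: "(nat \<Rightarrow> nat list) \<Rightarrow> (int \<Rightarrow> nat) set" where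
  "rk_subshift B = {x. (\<forall>i. x i \<in> {0,1}) \<and>
      (\<forall>i m. \<exists>n\<ge>1. sublist (map (\<lambda>j. x (i + int j)) [0..<m]) (B n))}"

definition complexity :: "(nat \<Rightarrow> nat list) \<Rightarrow> nat \<Rightarrow> nat" where
  "complexity B q = card {w. \<exists>x\<in>rk_subshift B. \<exists>i. w = map (\<lambda>j. x (i + int j)) [0..<q]}"

end

theory Submission
  imports Defs
begin

text \<open>
  Up to length |B_(k+1)| + 1, every word of the subshift occurs in B B or B 1 B with
  B = B_(k+1), because every later B_m is a concatenation of copies of B separated by empty
  or single-1 gaps. Write A = B_k, C = (A 1)^\<gamma> A and B = C^L with L = L_(k+1). A word of
  B B or B 1 B is a window of the C-periodic word or a window through the central spacer,
  so p(q) \<le> |C| + q. Windows of the C-periodic word are windows of the (A 1)-periodic word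
  unless they straddle a spacer-free junction A A, and around the central spacer
  C 1 C = (A 1)^(2\<gamma>+1) A is again (A 1)-periodic; this gives
  p(q) \<le> |A| + 1 + #junction windows + 2 (q - |C| - 1). Since A is itself an L_k-th power,
  the junction windows number at most |A|/L_k + 2 (q - |A| - 1). Combining the bounds,
  p(q)/q \<le> 3/2 + 1/(2 L_k) + 1/(2 (2\<gamma>+1)) for |B_k| < q \<le> |B_(k+1)| + 1, so the limsup
  is at most 3/2 + 1/(2 (2\<gamma>+1)) once L_k \<rightarrow> \<infinity>; and p(h_(k+1)) \<le> h_(k+1) + |C|, so
  choosing L_(k+1) so large that f > |C| from h_(k+1) on gives the second claim.
\<close>

definition window :: "(nat \<Rightarrow> 'a) \<Rightarrow> nat \<Rightarrow> nat \<Rightarrow> 'a list" where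
  "window x s q = map (\<lambda>j. x (s + j)) [0..<q]"

definition periodic :: "'a list \<Rightarrow> nat \<Rightarrow> 'a" where
  "periodic X i = X ! (i mod length X)"

lemma window_cong: "(\<And>j. j < q \<Longrightarrow> x (s + j) = y (t + j)) \<Longrightarrow> window x s q = window y t q"
  by (simp add: window_def)

lemma sublist_imp_window:
  assumes "sublist u w"
  obtains s where "s + length u \<le> length w" "u = window ((!) w) s (length u)"
proof -
  obtain ps ss where w: "w = ps @ u @ ss" using assms by (auto simp: sublist_def)
  show thesis
    by (rule that[of "length ps"]) (auto simp: w window_def nth_append intro!: nth_equalityI)
qed

lemma window_periodic_mod: "window (periodic X) s q = window (periodic X) (s mod length X) q"
  by (rule window_cong) (simp add: periodic_def mod_add_left_eq)

lemma range_window_periodic: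
  assumes "X \<noteq> []"
  shows "range (\<lambda>s. window (periodic X) s q) = (\<lambda>s. window (periodic X) s q) ` {..<length X}"
proof
  show "range (\<lambda>s. window (periodic X) s q) \<subseteq> (\<lambda>s. window (periodic X) s q) ` {..<length X}"
  proof clarify
    fix s
    have "s mod length X < length X" using assms by simp
    then show "window (periodic X) s q \<in> (\<lambda>s. window (periodic X) s q) ` {..<length X}"
      by (subst window_periodic_mod) blast
  qed
qed auto

lemma card_range_window_periodic:
  "X \<noteq> [] \<Longrightarrow> card (range (\<lambda>s. window (periodic X) s q)) \<le> length X"
  using card_image_le[of "{..<length X}" "\<lambda>s. window (periodic X) s q"]
  by (simp add: range_window_periodic)

lemma finite_range_window_periodic:
  "X \<noteq> [] \<Longrightarrow> finite (range (\<lambda>s. window (periodic X) s q))"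
  by (simp add: range_window_periodic)

lemma nth_concat_replicate:
  "i < n * length X \<Longrightarrow> concat (replicate n X) ! i = periodic X i"
proof (induction n arbitrary: i)
  case (Suc n)
  show ?case
  proof (cases "i < length X")
    case False
    then have "i - length X < n * length X" using Suc.prems by simp
    then show ?thesis using False Suc.IH by (simp add: nth_append le_mod_geq periodic_def)
  qed (simp add: nth_append periodic_def)
qed simp

lemma card_image_le_interval:
  assumes "S \<subseteq> {a..<b}" "b - a \<le> N"
  shows "card (f ` S) \<le> N"
proof -
  have "card (f ` S) \<le> card S" by (rule card_image_le) (rule finite_subset[OF assms(1)], simp)
  also have "\<dots> \<le> card {a..<b}" by (rule card_mono) (simp_all add: assms(1))
  finally show ?thesis using assms(2) by simp
qed

lemma card_le_card_Un:
  "S \<subseteq> X \<union> Y \<Longrightarrow> finite X \<Longrightarrow> finite Y \<Longrightarrow> card S \<le> card X + card Y"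
  by (meson card_Un_le card_mono finite_UnI order_trans)

inductive_set spaced :: "'a \<Rightarrow> 'a list \<Rightarrow> 'a list set" for a X where
  base: "X \<in> spaced a X"
| gap: "g \<in> {[], [a]} \<Longrightarrow> u \<in> spaced a X \<Longrightarrow> X @ g @ u \<in> spaced a X"

lemma spaced_append:
  "u \<in> spaced a X \<Longrightarrow> g \<in> {[], [a]} \<Longrightarrow> v \<in> spaced a X \<Longrightarrow> u @ g @ v \<in> spaced a X"
  by (induction rule: spaced.induct) (auto intro: spaced.intros)

lemma spaced_trans: "v \<in> spaced a Y \<Longrightarrow> Y \<in> spaced a X \<Longrightarrow> v \<in> spaced a X"
  by (induction rule: spaced.induct) (auto intro: spaced_append)

lemma concat_replicate_spaced:
  assumes "g \<in> {[], [a]}" shows "concat (replicate n (X @ g)) @ X \<in> spaced a X"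
proof (induction n)
  case (Suc n)
  then show ?case using spaced.gap[OF assms Suc] by simp
qed (simp add: spaced.base)

lemma spaced_prefix: "u \<in> spaced a X \<Longrightarrow> prefix X u"
  by (induction rule: spaced.induct) auto

text \<open>A word of length at most |X| + 1 meets at most one gap.\<close>
lemma sublist_spaced_short:
  assumes "u \<in> spaced a X" "sublist w u" "length w \<le> length X + 1"
  shows "sublist w (X @ X) \<or> sublist w (X @ [a] @ X)"
  using assms
proof (induction rule: spaced.induct)
  case base
  then show ?case by (metis sublist_append_rightI sublist_order.dual_order.trans)
next
  case (gap g u)
  have "sublist w u \<or> sublist w (X @ g @ X)"
  proof -
    consider "sublist w (X @ g)" | "sublist w u"
      | w1 w2 where "w = w1 @ w2" "suffix w1 (X @ g)" "prefix w2 u"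
      using gap.prems(1) unfolding append.assoc[symmetric] sublist_append by blast
    then show ?thesis
    proof cases
      case 1
      then show ?thesis by (metis append.assoc sublist_append_rightI sublist_order.dual_order.trans)
    next
      case 2
      then show ?thesis ..
    next
      case (3 w1 w2)
      show ?thesis
      proof (cases "w1 = []")
        case True
        then show ?thesis using 3 by (simp add: prefix_imp_sublist)
      next
        case False
        then have "length w2 \<le> length X" using 3(1) gap.prems(2) by (cases w1) auto
        then have "prefix w2 X" using 3(3) spaced_prefix[OF gap.hyps(2)] prefix_length_prefix by blast
        then have "sublist w ((X @ g) @ X)" using 3(1,2) unfolding sublist_append by blast
        then show ?thesis by simp
      qed
    qed
  qed
  then show ?case using gap.IH gap.prems(2) gap.hyps(1) by auto
qed

definition period_word :: "nat \<Rightarrow> nat list \<Rightarrow> nat list" where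
  "period_word g A = concat (replicate g (A @ [1])) @ A"

lemma length_period_word: "length (period_word g A) = g * (length A + 1) + length A"
  by (simp add: period_word_def length_concat sum_list_replicate)

lemma blk_Suc_period_word:
  "blk g L (Suc k) = concat (replicate (L (Suc k)) (period_word g (blk g L k)))"
  by (simp add: period_word_def)

lemma length_blk_Suc:
  "length (blk g L (Suc k)) = L (Suc k) * (g * (length (blk g L k) + 1) + length (blk g L k))"
  by (simp add: blk_Suc_period_word length_concat sum_list_replicate length_period_word)

lemma concat_replicate_Suc_spaced: "concat (replicate (Suc n) Y) \<in> spaced a Y"
proof -
  have "concat (replicate n (Y @ [])) @ Y \<in> spaced a Y" by (rule concat_replicate_spaced) simp
  then show ?thesis by (simp flip: replicate_append_same)
qed

lemma blk_spaced:
  assumes L: "\<forall>j. 0 < L j" and "j \<le> m"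
  shows "blk g L m \<in> spaced 1 (blk g L j)"
  using assms(2)
proof (induction m rule: dec_induct)
  case base
  show ?case by (rule spaced.base)
next
  case (step m)
  obtain n where n: "L (Suc m) = Suc n" using L by (metis gr0_implies_Suc)
  have "blk g L (Suc m) \<in> spaced 1 (period_word g (blk g L m))"
    unfolding blk_Suc_period_word n by (rule concat_replicate_Suc_spaced)
  moreover have "period_word g (blk g L m) \<in> spaced 1 (blk g L m)"
    unfolding period_word_def by (rule concat_replicate_spaced) simp
  ultimately show ?case using step.IH by (blast intro: spaced_trans)
qed

definition join_words :: "nat \<Rightarrow> nat list \<Rightarrow> nat list set" where
  "join_words q B = {u. length u = q \<and> (sublist u (B @ B) \<or> sublist u (B @ [1] @ B))}"

lemma finite_join_words: "finite (join_words q B)"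
proof (rule finite_subset)
  show "join_words q B \<subseteq> {u. set u \<subseteq> set (B @ [1] @ B) \<and> length u = q}"
  proof safe
    fix u x assume u: "u \<in> join_words q B" and x: "x \<in> set u"
    have "set u \<subseteq> set (B @ B) \<or> set u \<subseteq> set (B @ [1] @ B)"
      using u set_mono_sublist unfolding join_words_def by blast
    then show "x \<in> set (B @ [1] @ B)" using x by auto
  qed (simp add: join_words_def)
qed (rule finite_lists_length_eq, simp)

lemma complexity_le_card_join_words:
  assumes L: "\<forall>j. 0 < L j" and q: "q \<le> length (blk g L k) + 1"
  shows "complexity (rkB g L) q \<le> card (join_words q (blk g L k))"
  unfolding complexity_def
proof (rule card_mono[OF finite_join_words], safe)
  fix x i assume "x \<in> rk_subshift (rkB g L)"
  define w where "w = map (\<lambda>j. x (i + int j)) [0..<q]"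
  obtain n where w: "sublist w (blk g L (n - 1))"
    using \<open>x \<in> rk_subshift (rkB g L)\<close> unfolding rk_subshift_def rkB_def w_def by blast
  have "sublist w (blk g L k @ blk g L k) \<or> sublist w (blk g L k @ [1] @ blk g L k)"
  proof (cases "n - 1 \<le> k")
    case True
    have "sublist (blk g L (n - 1)) (blk g L k)"
      using spaced_prefix[OF blk_spaced[OF L True]] by (rule prefix_imp_sublist)
    then show ?thesis using w by (meson sublist_append_rightI sublist_order.dual_order.trans)
  next
    case False
    then show ?thesis using sublist_spaced_short[OF blk_spaced[OF L] w] q by (simp add: w_def)
  qed
  then show "w \<in> join_words q (blk g L k)" by (simp add: join_words_def w_def)
qed

lemma nth_period_word:
  assumes "i < length (period_word n A)"
  shows "period_word n A ! i = periodic (A @ [1]) i"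
proof (cases "i < n * (length A + 1)")
  case True
  then show ?thesis
    by (simp add: period_word_def nth_append length_concat sum_list_replicate nth_concat_replicate)
next
  case False
  then obtain r where r: "i = r + n * (length A + 1)" by (metis add.commute le_Suc_ex not_less)
  with assms have "r < length A" by (simp add: length_period_word)
  moreover have "i mod length (A @ [1]) = r"
    using \<open>r < length A\<close> by (simp only: r length_append_singleton Suc_eq_plus1 mod_mult_self1) simp
  ultimately show ?thesis using r
    by (simp add: period_word_def nth_append length_concat sum_list_replicate periodic_def)
qed

lemma period_word_spacer:
  "period_word n A @ [1] @ period_word m A = period_word (n + m + 1) A"
proof -
  have "concat (replicate (n + m + 1) X) = concat (replicate n X) @ X @ concat (replicate m X)"
    for X :: "nat list"
    using replicate_add[of n "Suc m" X] by simp
  then show ?thesis by (simp add: period_word_def)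
qed

lemma two_estimates_bound:
  fixes P q h c g :: nat
  assumes P1: "P \<le> c + q" and P2: "P + c + 1 \<le> 2 * q + h" and c: "c = g * (h + 1) + h"
  shows "2 * real P \<le> 3 * real q + real q / (2 * real g + 1)"
proof -
  have "(g * (h + 1) + 1) * P + c * (P + c + 1) \<le> (g * (h + 1) + 1) * (c + q) + c * (2 * q + h)"
    using mult_left_mono[OF P1] mult_left_mono[OF P2] by (rule add_mono) simp_all
  moreover have "(g * (h + 1) + 1) * P + c * (P + c + 1) = (h + 1) * ((2 * g + 1) * P) + c * (c + 1)"
    unfolding c by (simp add: algebra_simps)
  moreover have "(g * (h + 1) + 1) * (c + q) + c * (2 * q + h) + q
      = (h + 1) * ((3 * g + 2) * q) + c * (c + 1)"
    unfolding c by (simp add: algebra_simps)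
  ultimately have "(h + 1) * ((2 * g + 1) * P) \<le> (h + 1) * ((3 * g + 2) * q)"
    by linarith
  then have "real ((2 * g + 1) * P) \<le> real ((3 * g + 2) * q)"
    by (simp only: mult_le_cancel1 of_nat_le_iff)
  then have "(2 * real g + 1) * (2 * real P) \<le> (2 * real g + 1) * (3 * real q) + real q"
    by (simp add: algebra_simps)
  then show ?thesis
    by (simp add: field_simps)
qed

text \<open>One level of the construction: A stands for B_k and L for L_(k+1), so B is B_(k+1).\<close>
locale rank_one_level =
  fixes g :: nat and A :: "nat list" and L :: nat
  assumes g_pos: "0 < g" and L_pos: "0 < L"
begin

abbreviation "h \<equiv> length A"
abbreviation "C \<equiv> period_word g A"
abbreviation "c \<equiv> length C"
abbreviation "B \<equiv> concat (replicate L C)"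
abbreviation "W \<equiv> B @ [1] @ B"
abbreviation "perA \<equiv> periodic (A @ [1])"
abbreviation "perC \<equiv> periodic C"

lemma c_eq: "c = g * (h + 1) + h"
  by (rule length_period_word)

lemma length_B: "length B = L * c"
  by (simp add: length_concat sum_list_replicate)

lemma C_nonempty: "C \<noteq> []"
  using g_pos c_eq by auto

lemma W_nth_below: "i < L * c \<Longrightarrow> W ! i = perC i"
  by (simp add: nth_append length_B nth_concat_replicate)

lemma W_nth_above:
  assumes "L * c < i" "i \<le> 2 * (L * c)"
  shows "W ! i = perC (i - L * c - 1)"
  using assms by (simp add: nth_append length_B nth_concat_replicate)

text \<open>Around the spacer, C 1 C = (A 1)^(2g+1) A is a piece of the (A 1)-periodic word.\<close>
lemma W_nth_middle:
  assumes "(L - 1) * c \<le> i" "i < (L - 1) * c + (2 * c + 1)"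
  shows "W ! i = perA (i - (L - 1) * c)"
proof -
  define D where "D = concat (replicate (L - 1) C)"
  obtain L' where L': "L = Suc L'" using L_pos gr0_implies_Suc by blast
  have "B = D @ C" by (simp add: D_def L' flip: replicate_append_same)
  moreover have "B = C @ D" by (simp add: D_def L')
  ultimately
  have "W = D @ period_word (g + g + 1) A @ D"
    by (metis append.assoc period_word_spacer)
  moreover have "length D = (L - 1) * c"
    by (simp add: D_def length_concat sum_list_replicate)
  moreover have "length (period_word (g + g + 1) A) = 2 * c + 1"
    by (simp add: length_period_word c_eq algebra_simps)
  moreover have "i - (L - 1) * c < 2 * c + 1" using assms by arith
  ultimately have "W ! i = period_word (g + g + 1) A ! (i - (L - 1) * c)"
    using assms(1) by (simp add: nth_append)
  then show ?thesis
    using \<open>i - (L - 1) * c < 2 * c + 1\<close> \<open>length (period_word (g + g + 1) A) = 2 * c + 1\<close>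
    by (simp add: nth_period_word)
qed

definition crossing :: "nat \<Rightarrow> nat set" where
  "crossing q = {s. s \<le> L * c \<and> L * c < s + q \<and> s + q \<le> 2 * (L * c) + 1}"

text \<open>The windows of perC that straddle the spacer-free junction A A between two copies of C.\<close>
definition junction :: "nat \<Rightarrow> nat list set" where
  "junction q = (\<lambda>s. window perC s q) ` {s. s < c \<and> c < s + q}"

lemma join_words_cases:
  assumes "u \<in> join_words q B"
  shows "u \<in> range (\<lambda>s. window perC s q) \<union> (\<lambda>s. window ((!) W) s q) ` crossing q"
proof -
  have "B @ B = concat (replicate (L + L) C)" by (simp add: replicate_add)
  then have "window ((!) (B @ B)) s q = window perC s q" if "s + q \<le> 2 * (L * c)" for s
    using that by (intro window_cong) (simp add: nth_concat_replicate algebra_simps)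
  moreover have
    "window ((!) W) s q \<in> range (\<lambda>s. window perC s q) \<union> (\<lambda>s. window ((!) W) s q) ` crossing q"
    if "s + q \<le> 2 * (L * c) + 1" for s
  proof (cases "s + q \<le> L * c \<or> L * c < s")
    case True
    have "window ((!) W) s q = window perC (if L * c < s then s - L * c - 1 else s) q"
    proof (rule window_cong)
      fix j assume "j < q"
      then show "W ! (s + j) = perC ((if L * c < s then s - L * c - 1 else s) + j)"
        using True that W_nth_below[of "s + j"] W_nth_above[of "s + j"] by auto
    qed
    then show ?thesis by blast
  next
    case False
    then show ?thesis using that by (auto simp: crossing_def)
  qed
  moreover have "length u = q" "sublist u (B @ B) \<or> sublist u W"
    using assms unfolding join_words_def by auto
  ultimately show ?thesis
  proof (elim conjE disjE)
    assume "sublist u (B @ B)"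
    then obtain s where "s + q \<le> 2 * (L * c)" "u = window ((!) (B @ B)) s q"
      using \<open>length u = q\<close> length_B by (auto simp: mult_2 elim!: sublist_imp_window)
    then show ?thesis using \<open>\<And>s. s + q \<le> 2 * (L * c) \<Longrightarrow> _\<close> by blast
  next
    assume "sublist u W"
    then obtain s where "s + q \<le> 2 * (L * c) + 1" "u = window ((!) W) s q"
      using \<open>length u = q\<close> length_B by (auto simp: mult_2 elim!: sublist_imp_window)
    then show ?thesis using \<open>\<And>s. s + q \<le> 2 * (L * c) + 1 \<Longrightarrow> _\<close> by blast
  qed
qed

lemma finite_crossing: "finite (crossing q)"
  by (rule finite_subset[of _ "{..L * c}"]) (auto simp: crossing_def)

lemma card_join_words_le_period: "card (join_words q B) \<le> c + q"
proof -
  let ?X = "(\<lambda>s. window ((!) W) s q) ` crossing q"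
  have "card ?X \<le> q"
    by (rule card_image_le_interval[of _ "L * c + 1 - q" "L * c + 1"]) (auto simp: crossing_def)
  have "card (join_words q B) \<le> card (range (\<lambda>s. window perC s q)) + card ?X"
    using join_words_cases finite_range_window_periodic[OF C_nonempty] finite_crossing
    by (intro card_le_card_Un) auto
  then show ?thesis using card_range_window_periodic[OF C_nonempty, of q] \<open>card ?X \<le> q\<close> by linarith
qed

lemma perC_nth: "i < c \<Longrightarrow> perC i = perA i"
  by (simp add: periodic_def nth_period_word)

lemma window_perC_cases: "window perC s q \<in> range (\<lambda>s. window perA s q) \<union> junction q"
proof -
  let ?s = "s mod c"
  have s: "window perC s q = window perC ?s q" by (rule window_periodic_mod)
  show ?thesis
  proof (cases "?s + q \<le> c")
    case True
    then have "window perC ?s q = window perA ?s q" by (intro window_cong) (simp add: perC_nth)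
    then show ?thesis using s by auto
  next
    case False
    then show ?thesis using s C_nonempty by (auto simp: junction_def)
  qed
qed

definition far_crossing :: "nat \<Rightarrow> nat set" where
  "far_crossing q = {s \<in> crossing q. s < (L - 1) * c \<or> (L - 1) * c + (2 * c + 1) < s + q}"

lemma crossing_window_cases:
  assumes "s \<in> crossing q"
  shows "window ((!) W) s q
    \<in> range (\<lambda>s. window perA s q) \<union> (\<lambda>s. window ((!) W) s q) ` far_crossing q"
proof (cases "s \<in> far_crossing q")
  case False
  have "window ((!) W) s q = window perA (s - (L - 1) * c) q"
  proof (rule window_cong)
    fix j assume "j < q"
    then show "W ! (s + j) = perA (s - (L - 1) * c + j)"
      using False assms W_nth_middle[of "s + j"] by (auto simp: far_crossing_def)
  qed
  then show ?thesis by auto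
qed simp

lemma card_far_crossing: "card ((\<lambda>s. window ((!) W) s q) ` far_crossing q) \<le> 2 * (q - c - 1)"
proof -
  have Lc: "L * c = (L - 1) * c + c" using L_pos by (cases L) auto
  let ?f = "\<lambda>s. window ((!) W) s q"
  let ?I = "{L * c + 1 - q..<(L - 1) * c}" and ?J = "{L * c + c + 2 - q..<L * c + 1}"
  have "?f ` far_crossing q \<subseteq> ?f ` ?I \<union> ?f ` ?J"
    using Lc by (auto simp: far_crossing_def crossing_def)
  then have "card (?f ` far_crossing q) \<le> card (?f ` ?I) + card (?f ` ?J)"
    by (intro card_le_card_Un) auto
  moreover have "card (?f ` ?I) \<le> q - c - 1"
    by (rule card_image_le_interval[OF subset_refl]) (use Lc in arith)
  moreover have "card (?f ` ?J) \<le> q - c - 1"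
    by (rule card_image_le_interval[OF subset_refl]) arith
  ultimately show ?thesis by linarith
qed

lemma card_join_words_le_junction:
  "card (join_words q B) \<le> (h + 1) + card (junction q) + 2 * (q - c - 1)"
proof -
  let ?R = "range (\<lambda>s. window perA s q)"
  let ?F = "(\<lambda>s. window ((!) W) s q) ` far_crossing q"
  have "join_words q B \<subseteq> ?R \<union> junction q \<union> ?F"
    using join_words_cases window_perC_cases crossing_window_cases by blast
  moreover have "finite ?R" by (rule finite_range_window_periodic) simp
  moreover have "finite (junction q)" "finite ?F"
    using finite_crossing by (auto simp: junction_def far_crossing_def)
  ultimately have "card (join_words q B) \<le> card (?R \<union> junction q) + card ?F"
    by (intro card_le_card_Un) auto
  moreover have "card (?R \<union> junction q) \<le> card ?R + card (junction q)"
    by (rule card_Un_le)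
  moreover have "card ?R \<le> h + 1" using card_range_window_periodic[of "A @ [1]" q] by simp
  ultimately show ?thesis using card_far_crossing[of q] by linarith
qed

lemma card_junction_le_length: "card (junction q) \<le> q - 1"
  unfolding junction_def by (rule card_image_le_interval[of _ "c + 1 - q" c]) auto

lemma card_junction_le_period: "card (junction q) \<le> c"
  unfolding junction_def by (rule card_image_le_interval[of _ "c + 1 - q" c]) auto

lemma perC_around_junction:
  assumes "c - h \<le> i" "i < c + h"
  shows "perC i = (A @ A) ! (i - (c - h))"
proof (cases "i < c")
  case True
  then have "perC i = C ! i" by (simp add: periodic_def)
  also have "\<dots> = A ! (i - (c - h))"
    using True assms c_eq by (simp add: period_word_def nth_append length_concat sum_list_replicate)
  also have "\<dots> = (A @ A) ! (i - (c - h))"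
    using True c_eq by (simp add: nth_append)
  finally show ?thesis .
next
  case False
  then obtain r where i: "i = c + r" by (metis le_Suc_ex not_less)
  with assms have r: "r < h" by simp
  have "perC i = C ! r" using i r c_eq by (simp add: periodic_def)
  also have "\<dots> = A ! r" using r c_eq by (simp add: nth_period_word periodic_def nth_append)
  also have "\<dots> = (A @ A) ! (i - (c - h))" using i r c_eq by (simp add: nth_append)
  finally show ?thesis .
qed

lemma card_junction_le_power:
  assumes A: "A = concat (replicate n D)" and n: "0 < n" and D: "D \<noteq> []"
  shows "card (junction q) \<le> length D + 2 * (q - h - 1)"
proof -
  let ?f = "\<lambda>s. window perC s q"
  let ?E = "?f ` {c + 1 - q..<c - h} \<union> ?f ` {c + h + 1 - q..<c}"
  have AA: "A @ A = concat (replicate (n + n) D)" using A by (simp add: replicate_add)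
  have hD: "h = n * length D" using A by (simp add: length_concat sum_list_replicate)
  have "junction q \<subseteq> range (\<lambda>s. window (periodic D) s q) \<union> ?E"
  proof
    fix u assume "u \<in> junction q"
    then obtain s where s: "s < c" "c < s + q" "u = ?f s" by (auto simp: junction_def)
    show "u \<in> range (\<lambda>s. window (periodic D) s q) \<union> ?E"
    proof (cases "c - h \<le> s \<and> s + q \<le> c + h")
      case True
      have "?f s = window (periodic D) (s - (c - h)) q"
      proof (rule window_cong)
        fix j assume "j < q"
        then have "perC (s + j) = (A @ A) ! (s + j - (c - h))"
          using True by (intro perC_around_junction) auto
        also have "\<dots> = periodic D (s - (c - h) + j)"
          using True \<open>j < q\<close> hD c_eq unfolding AA
          by (subst nth_concat_replicate) (auto simp: algebra_simps)
        finally show "perC (s + j) = periodic D (s - (c - h) + j)" .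
      qed
      then show ?thesis using s by auto
    next
      case False
      then show ?thesis using s by auto
    qed
  qed
  then have "card (junction q) \<le> card (range (\<lambda>s. window (periodic D) s q)) + card ?E"
    using finite_range_window_periodic[OF D] by (intro card_le_card_Un) auto
  moreover have "card ?E \<le> card (?f ` {c + 1 - q..<c - h}) + card (?f ` {c + h + 1 - q..<c})"
    by (rule card_Un_le)
  moreover have "card (?f ` {c + 1 - q..<c - h}) \<le> q - h - 1"
    by (rule card_image_le_interval[OF subset_refl]) arith
  moreover have "card (?f ` {c + h + 1 - q..<c}) \<le> q - h - 1"
    by (rule card_image_le_interval[OF subset_refl]) arith
  ultimately show ?thesis using card_range_window_periodic[OF D, of q] by linarith
qed

lemma card_join_words_short:
  assumes "h < q" "q \<le> c" "A = concat (replicate n D)" "0 < n" "D \<noteq> []"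
  shows "2 * card (join_words q B) \<le> 3 * q + length D"
  using card_join_words_le_junction[of q] card_junction_le_length[of q]
    card_junction_le_power[OF assms(3-5), of q] assms(1,2)
  by linarith

lemma card_join_words_long:
  assumes "c < q"
  shows "2 * real (card (join_words q B)) \<le> 3 * real q + real q / (2 * real g + 1)"
proof (rule two_estimates_bound)
  show "card (join_words q B) \<le> c + q" by (rule card_join_words_le_period)
  show "card (join_words q B) + c + 1 \<le> 2 * q + h"
    using card_join_words_le_junction[of q] card_junction_le_period[of q] assms by linarith
qed (rule c_eq)

end

lemma complexity_le_level:
  assumes L: "\<forall>j. 0 < L j" and g: "0 < g" and k: "0 < k"
    and q: "length (blk g L k) < q" "q \<le> length (blk g L (Suc k)) + 1"
  shows "2 * real (complexity (rkB g L) q) \<le> (3 + 1 / real (L k) + 1 / (2 * real g + 1)) * real q"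
proof -
  interpret rank_one_level g "blk g L k" "L (Suc k)"
    using L g by unfold_locales auto
  define P where "P = complexity (rkB g L) q"
  have P: "P \<le> card (join_words q B)"
    unfolding P_def blk_Suc_period_word[symmetric] using complexity_le_card_join_words[OF L q(2)] .
  have "0 \<le> real q / (2 * real g + 1)" "0 \<le> real q / real (L k)" by simp_all
  have split: "(3 + 1 / real (L k) + 1 / (2 * real g + 1)) * real q
      = 3 * real q + real q / real (L k) + real q / (2 * real g + 1)"
    by (simp add: algebra_simps)
  show ?thesis
  proof (cases "q \<le> c")
    case True
    obtain k' where k': "k = Suc k'" using k gr0_implies_Suc by blast
    let ?D = "period_word g (blk g L k')"
    have A: "blk g L k = concat (replicate (L k) ?D)" unfolding k' by (rule blk_Suc_period_word)
    have "?D \<noteq> []" using g by (simp add: period_word_def)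
    then have "2 * P \<le> 3 * q + length ?D"
      using P card_join_words_short[OF q(1) True A] L by (meson le_trans mult_le_mono2)
    moreover have "L k * length ?D = h"
      using A by (simp add: length_concat sum_list_replicate)
    then have "real (L k) * real (length ?D) < real q"
      using q(1) by (simp flip: of_nat_mult)
    then have "real (length ?D) \<le> real q / real (L k)"
      using L by (simp add: field_simps)
    ultimately have "2 * real P \<le> 3 * real q + real q / real (L k)"
      by linarith
    then show ?thesis
      using \<open>0 \<le> real q / (2 * real g + 1)\<close> unfolding P_def split by linarith
  next
    case False
    then have "2 * real P \<le> 3 * real q + real q / (2 * real g + 1)"
      using P card_join_words_long[of q] by (simp add: not_le)
    then show ?thesis
      using \<open>0 \<le> real q / real (L k)\<close> unfolding P_def split by linarith
  qed
qed

lemma complexity_length_blk_Suc_le: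
  assumes L: "\<forall>j. 0 < L j" and g: "0 < g"
  shows "complexity (rkB g L) (length (blk g L (Suc k)))
           \<le> length (blk g L (Suc k)) + (g * (length (blk g L k) + 1) + length (blk g L k))"
proof -
  interpret rank_one_level g "blk g L k" "L (Suc k)"
    using L g by unfold_locales auto
  let ?H = "length (blk g L (Suc k))"
  have "complexity (rkB g L) ?H \<le> card (join_words ?H (blk g L (Suc k)))"
    by (rule complexity_le_card_join_words[OF L]) simp
  also have "\<dots> \<le> c + ?H"
    unfolding blk_Suc_period_word by (rule card_join_words_le_period)
  finally show ?thesis by (simp only: c_eq ac_simps)
qed

lemma strict_mono_length_blk:
  assumes "0 < g" "\<forall>j. 0 < L j"
  shows "strict_mono (\<lambda>k. length (blk g L k))"
proof (rule strict_mono_Suc_iff[THEN iffD2], intro allI)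
  fix k
  have "length (blk g L k) < g * (length (blk g L k) + 1) + length (blk g L k)"
    using assms(1) by simp
  also have "\<dots> \<le> L (Suc k) * (g * (length (blk g L k) + 1) + length (blk g L k))"
    using assms(2) by (simp add: Suc_le_eq)
  also have "\<dots> = length (blk g L (Suc k))"
    by (rule length_blk_Suc[symmetric])
  finally show "length (blk g L k) < length (blk g L (Suc k))" .
qed

lemma strict_mono_bracket:
  fixes H :: "nat \<Rightarrow> nat"
  assumes "strict_mono H" "H K < q"
  obtains k where "K \<le> k" "H k < q" "q \<le> H (Suc k)"
proof -
  have "K + q \<le> H (K + q)" using seq_suble[OF assms(1)] .
  then obtain i where "\<forall>j\<le>i. \<not> q \<le> H (K + j)" "q \<le> H (K + Suc i)"
    using ex_least_nat_less[of "\<lambda>i. q \<le> H (K + i)" q] assms(2) by auto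
  then show thesis by (intro that[of "K + i"]) auto
qed

lemma limsup_complexity_le:
  assumes g: "0 < g" and L: "\<forall>j. 0 < L j" and L_top: "filterlim L at_top sequentially"
  shows "limsup (\<lambda>q. ereal (real (complexity (rkB g L) q) / real q))
           \<le> ereal (3 / 2 + 1 / (2 * (2 * real g + 1)))"
proof (rule ereal_le_epsilon2)
  fix \<delta> :: real assume "0 < \<delta>"
  let ?H = "\<lambda>k. length (blk g L k)"
  obtain K where K: "\<forall>k\<ge>K. nat \<lceil>1 / \<delta>\<rceil> \<le> L k"
    using L_top unfolding filterlim_at_top eventually_sequentially by blast
  have "\<forall>q>?H (Suc K).
    real (complexity (rkB g L) q) / real q \<le> 3 / 2 + 1 / (2 * (2 * real g + 1)) + \<delta>"
  proof (intro allI impI)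
    fix q assume "?H (Suc K) < q"
    then obtain k where k: "Suc K \<le> k" "?H k < q" "q \<le> ?H (Suc k)"
      using strict_mono_bracket[OF strict_mono_length_blk[OF g L]] by blast
    have "1 / \<delta> \<le> real (L k)"
      using K k(1) real_nat_ceiling_ge[of "1 / \<delta>"] by (meson Suc_leD of_nat_le_iff order_trans)
    then have "1 / real (L k) \<le> \<delta>"
      using \<open>0 < \<delta>\<close> by (simp add: divide_le_eq mult.commute)
    then have "(3 + 1 / real (L k) + 1 / (2 * real g + 1)) * real q
        \<le> (3 + \<delta> + 1 / (2 * real g + 1)) * real q"
      by (intro mult_right_mono) simp_all
    moreover have "2 * real (complexity (rkB g L) q) \<le> (3 + 1 / real (L k) + 1 / (2 * real g + 1)) * real q"
      using complexity_le_level[OF L g _ k(2)] k(1,3) by simp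
    ultimately have "real (complexity (rkB g L) q) \<le> (3 + \<delta> + 1 / (2 * real g + 1)) / 2 * real q"
      by simp
    moreover have "0 < real q" using k(2) by simp
    ultimately have "real (complexity (rkB g L) q) / real q \<le> (3 + \<delta> + 1 / (2 * real g + 1)) / 2"
      by (simp add: pos_divide_le_eq)
    also have "\<dots> = 3 / 2 + 1 / (2 * (2 * real g + 1)) + \<delta> / 2"
      by (simp add: field_simps)
    also have "\<dots> \<le> 3 / 2 + 1 / (2 * (2 * real g + 1)) + \<delta>"
      using \<open>0 < \<delta>\<close> by simp
    finally show "real (complexity (rkB g L) q) / real q \<le> 3 / 2 + 1 / (2 * (2 * real g + 1)) + \<delta>" .
  qed
  then have "eventually (\<lambda>q. ereal (real (complexity (rkB g L) q) / real q)
      \<le> ereal (3 / 2 + 1 / (2 * (2 * real g + 1))) + ereal \<delta>) sequentially"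
    unfolding eventually_sequentially by (auto intro: exI[of _ "Suc (?H (Suc K))"])
  then show "limsup (\<lambda>q. ereal (real (complexity (rkB g L) q) / real q))
      \<le> ereal (3 / 2 + 1 / (2 * (2 * real g + 1))) + ereal \<delta>"
    by (rule Limsup_bounded)
qed

definition threshold :: "(nat \<Rightarrow> real) \<Rightarrow> real \<Rightarrow> nat" where
  "threshold f b = (SOME M. \<forall>m\<ge>M. b < f m)"

lemma less_at_threshold:
  assumes "filterlim f at_top sequentially" "threshold f b \<le> m"
  shows "b < f m"
proof -
  have "\<exists>M. \<forall>m\<ge>M. b < f m"
    using assms(1) unfolding filterlim_at_top_dense eventually_sequentially by blast
  from someI_ex[OF this] show ?thesis
    using assms(2) unfolding threshold_def by blast
qed

definition reps :: "nat \<Rightarrow> (nat \<Rightarrow> real) \<Rightarrow> nat \<Rightarrow> nat \<Rightarrow> nat" where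
  "reps g f j h = max (j + 2) (threshold f (real (g * (h + 1) + h)))"

text \<open>heights g f j is the length of B_(j+1) for the repetition counts rep_seq g f; it is
  defined on its own to break the circularity of choosing L_(j+1) in terms of |B_(j+1)|.\<close>
primrec heights :: "nat \<Rightarrow> (nat \<Rightarrow> real) \<Rightarrow> nat \<Rightarrow> nat" where
  "heights g f 0 = 1"
| "heights g f (Suc j) = reps g f j (heights g f j) * (g * (heights g f j + 1) + heights g f j)"

definition rep_seq :: "nat \<Rightarrow> (nat \<Rightarrow> real) \<Rightarrow> nat \<Rightarrow> nat" where
  "rep_seq g f n = (case n of 0 \<Rightarrow> 2 | Suc j \<Rightarrow> reps g f j (heights g f j))"

lemma rep_seq_ge: "n + 1 \<le> rep_seq g f n"
  by (cases n) (auto simp: rep_seq_def reps_def)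

lemma rep_seq_pos: "0 < rep_seq g f n"
  using rep_seq_ge[of n g f] by linarith

lemma filterlim_rep_seq: "filterlim (rep_seq g f) at_top sequentially"
proof (rule filterlim_at_top_mono[OF filterlim_ident])
  show "eventually (\<lambda>n. n \<le> rep_seq g f n) sequentially"
    by (intro always_eventually allI) (rule le_trans[OF le_add1 rep_seq_ge])
qed

lemma length_blk_rep_seq: "length (blk g (rep_seq g f) j) = heights g f j"
proof (induction j)
  case (Suc j)
  show ?case by (simp only: length_blk_Suc Suc heights.simps) (simp add: rep_seq_def)
qed simp

lemma complexity_rep_seq_height:
  fixes k :: nat
  assumes f: "filterlim f at_top sequentially" and g: "0 < g"
  defines "H \<equiv> length (blk g (rep_seq g f) (Suc k))"
  shows "real (complexity (rkB g (rep_seq g f)) H) < real H + f H"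
proof -
  let ?c = "g * (heights g f k + 1) + heights g f k"
  have H: "H = reps g f k (heights g f k) * ?c"
    unfolding H_def by (simp only: length_blk_rep_seq heights.simps)
  have "threshold f (real ?c) \<le> reps g f k (heights g f k)"
    by (simp add: reps_def)
  also have "\<dots> \<le> H"
    unfolding H using g by simp
  finally have "real ?c < f H"
    by (rule less_at_threshold[OF f])
  moreover have "complexity (rkB g (rep_seq g f)) H \<le> H + ?c"
    using complexity_length_blk_Suc_le[of "rep_seq g f" g k] rep_seq_pos g
    by (simp add: H_def length_blk_rep_seq)
  ultimately show ?thesis by linarith
qed

theorem theorem4:
  fixes \<epsilon> :: real and f :: "nat \<Rightarrow> real"
  assumes "\<epsilon> > 0" and "filterlim f at_top sequentially"
  shows "\<exists>(\<gamma>::nat) (L::nat \<Rightarrow> nat). \<gamma> > 1 \<and> (\<forall>n\<ge>1. L n > 1) \<and>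
           filterlim L at_top sequentially \<and>
           limsup (\<lambda>q. ereal (real (complexity (rkB \<gamma> L) q) / real q)) < ereal (3/2 + \<epsilon>) \<and>
           (\<forall>n\<ge>2. real (complexity (rkB \<gamma> L) (length (rkB \<gamma> L n)))
                    < real (length (rkB \<gamma> L n)) + f (length (rkB \<gamma> L n)))"
proof (intro exI conjI allI impI)
  define g where "g = nat \<lceil>1 / \<epsilon>\<rceil> + 2"
  show "1 < g" by (simp add: g_def)
  show "1 < rep_seq g f n" if "1 \<le> n" for n
    using rep_seq_ge[of n g f] that by linarith
  show "filterlim (rep_seq g f) at_top sequentially" by (rule filterlim_rep_seq)
  have "1 / \<epsilon> < 2 * (2 * real g + 1)"
    using real_nat_ceiling_ge[of "1 / \<epsilon>"] by (simp add: g_def)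
  then have "1 / (2 * (2 * real g + 1)) < \<epsilon>"
    using assms(1) by (simp add: divide_less_eq mult.commute)
  have "limsup (\<lambda>q. ereal (real (complexity (rkB g (rep_seq g f)) q) / real q))
      \<le> ereal (3 / 2 + 1 / (2 * (2 * real g + 1)))"
    by (rule limsup_complexity_le) (simp_all add: g_def rep_seq_pos filterlim_rep_seq)
  also have "\<dots> < ereal (3 / 2 + \<epsilon>)"
    using \<open>1 / (2 * (2 * real g + 1)) < \<epsilon>\<close> by simp
  finally show "limsup (\<lambda>q. ereal (real (complexity (rkB g (rep_seq g f)) q) / real q))
      < ereal (3 / 2 + \<epsilon>)" .
  fix n :: nat assume "2 \<le> n"
  then obtain k where "n = Suc (Suc k)" by (metis add_2_eq_Suc le_Suc_ex)
  then show "real (complexity (rkB g (rep_seq g f)) (length (rkB g (rep_seq g f) n)))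
      < real (length (rkB g (rep_seq g f) n)) + f (length (rkB g (rep_seq g f) n))"
    using complexity_rep_seq_height[OF assms(2), of g k] by (simp only: rkB_def diff_Suc_1) (simp add: g_def)
qed

end
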